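(* Let $z,z'\in\mathbb C\setminus\mathbb Z$ with $t=zz'\notin\{0,-1,-2,\dots\}$, and let $M_{zz'}$ be defined by $$M_{zz'}(\lambda)=\frac{\prod_{(i,j)\in\lambda}(z+j-i)(z'+j-i)}{(t)_{|\lambda|}}\cdot\frac{(\dim\lambda)^2}{|\lambda|!},\qquad M_{zz'}(\varnothing)=1 .$$ Then $M_{zz'}(\lambda)\neq0$ for every Young diagram $\lambda$. Moreover, $M_{zz'}(\lambda)>0$ for all Young diagrams $\lambda$ if and only if one of the following holds: (i) $z'=\bar z$ (and $z\notin\mathbb Z$); (ii) $z,z'$ are real and both lie in one open interval $(m,m+1)$ with $m\in\mathbb Z$.
   Context: Young diagrams are identified with partitions; $|\lambda|$ is the number of boxes and $(i,j)\in\lambda$ denotes the box in row $i$, column $j$. $\dim\lambda$ is the number of standard Young tableaux of shape $\lambda$. $(t)_n=t(t+1)\cdots(t+n-1)$. *)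

theory Defs
  imports Complex_Main
begin

text \<open>Young diagrams = integer partitions, represented as weakly decreasing
lists of positive row lengths.\<close>
definition young_diagram :: "nat list \<Rightarrow> bool" where
  "young_diagram la \<longleftrightarrow> sorted_wrt (\<ge>) la \<and> 0 \<notin> set la"

text \<open>Boxes (i,j): row i, column j, 1-indexed.\<close>
definition boxes :: "nat list \<Rightarrow> (nat \<times> nat) set" where
  "boxes la = {(i, j). 1 \<le> i \<and> i \<le> length la \<and> 1 \<le> j \<and> j \<le> la ! (i - 1)}"

definition size_yd :: "nat list \<Rightarrow> nat" where
  "size_yd la = sum_list la"

definition SYT :: "nat list \<Rightarrow> ((nat \<times> nat) \<Rightarrow> nat) set" where
  "SYT la = {T. bij_betw T (boxes la) {1..size_yd la}
     \<and> (\<forall>i j. (i, j) \<in> boxes la \<and> (i, Suc j) \<in> boxes la \<longrightarrow> T (i, j) < T (i, Suc j))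
     \<and> (\<forall>i j. (i, j) \<in> boxes la \<and> (Suc i, j) \<in> boxes la \<longrightarrow> T (i, j) < T (Suc i, j))
     \<and> (\<forall>x. x \<notin> boxes la \<longrightarrow> T x = 0)}"

definition dim_yd :: "nat list \<Rightarrow> nat" where
  "dim_yd la = card (SYT la)"

definition M_zz :: "complex \<Rightarrow> complex \<Rightarrow> nat list \<Rightarrow> complex" where
  "M_zz z z' la =
     (\<Prod>(i, j)\<in>boxes la. (z + of_int (int j - int i)) * (z' + of_int (int j - int i)))
       / pochhammer (z * z') (size_yd la)
     * (of_nat (dim_yd la))^2 / of_nat (fact (size_yd la))"

end

theory Submission
  imports Defs "HOL-Library.Complex_Order"
begin

text \<open>
  \<open>M\<^sub>z\<^sub>z\<^sub>'(\<lambda>)\<close> is \<open>content_ratio z z' \<lambda>\<close>, the product of \<open>(z + c)(z' + c)\<close> over the contents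
  \<open>c = j - i\<close> of the boxes divided by \<open>(zz')\<^sub>|\<^sub>\<lambda>\<^sub>|\<close>, times \<open>dim\<lambda>\<^sup>2/|\<lambda>|! > 0\<close>; the dimension is
  positive because every shape has a standard tableau (number the first row \<open>1..r\<close> and shift a
  tableau of the remaining rows by \<open>r\<close>). No factor vanishes when \<open>z, z' \<notin> \<int>\<close> and \<open>zz' \<notin> -\<nat>\<close>.

  If \<open>z' = z\<^sup>*\<close> each factor is \<open>|z + c|\<^sup>2 > 0\<close>; if \<open>z, z'\<close> lie in one interval \<open>(m, m + 1)\<close> then
  \<open>z + c\<close> and \<open>z' + c\<close> have the same sign. Since \<open>zz'\<close> is the factor with \<open>c = 0\<close>, the Pochhammer
  symbol is positive as well.

  Conversely, lengthening a row or a column of length \<open>n\<close> multiplies \<open>content_ratio\<close> by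
  \<open>(z \<plusminus> n)(z' \<plusminus> n)/(zz' + n)\<close>, and completing the square \<open>(2,2)\<close> from \<open>(2,1)\<close> multiplies it by
  \<open>zz'/(zz' + 3)\<close>, so all these ratios are positive. For \<open>n = 1, 2\<close> this makes \<open>zz'\<close> and \<open>z + z'\<close>
  real, hence \<open>z, z'\<close> are conjugate or both real. Real \<open>z < c < z'\<close> with \<open>c \<in> \<int>\<close> are excluded:
  if \<open>zz' > 0\<close> the ratio at \<open>n = |c|\<close> is negative; if \<open>zz' < 0\<close> then \<open>zz' < -3\<close>, and at the
  largest \<open>n\<close> with \<open>zz' + n < 0\<close> the ratios force \<open>z < -n\<close> and \<open>n < z'\<close>, so
  \<open>n\<^sup>2 < -zz' < n + 1\<close>, which is impossible for \<open>n \<ge> 3\<close>.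
\<close>

lemma boxes_Nil: "boxes [] = {}"
  by (simp add: boxes_def)

lemma mem_boxes_Cons:
  "(i, j) \<in> boxes (r # la) \<longleftrightarrow> (i = 1 \<and> 1 \<le> j \<and> j \<le> r) \<or> (\<exists>k. i = Suc k \<and> (k, j) \<in> boxes la)"
  by (cases i) (auto simp: boxes_def nth_Cons split: nat.splits)

lemma zero_row_notin_boxes [simp]: "(0, j) \<notin> boxes la"
  by (simp add: boxes_def)

lemma boxes_Cons:
  "boxes (r # la) = (\<lambda>j. (1, j)) ` {1..r} \<union> (\<lambda>(i, j). (Suc i, j)) ` boxes la"
  by (auto simp: mem_boxes_Cons image_iff)

lemma finite_boxes: "finite (boxes la)"
proof (rule finite_subset)
  show "boxes la \<subseteq> {..length la} \<times> {..sum_list la}"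
    by (auto simp: boxes_def intro: order_trans[OF _ elem_le_sum_list])
qed auto

lemma finite_SYT: "finite (SYT la)"
proof (rule finite_subset)
  show "SYT la \<subseteq> {T. \<forall>x. (x \<in> boxes la \<longrightarrow> T x \<in> {1..size_yd la}) \<and> (x \<notin> boxes la \<longrightarrow> T x = 0)}"
    by (auto simp: SYT_def bij_betw_def)
qed (intro finite_set_of_finite_funs finite_boxes finite_atLeastAtMost)

definition prepend_row :: "nat \<Rightarrow> nat list \<Rightarrow> (nat \<times> nat \<Rightarrow> nat) \<Rightarrow> nat \<times> nat \<Rightarrow> nat" where
  "prepend_row r la T = (\<lambda>(i, j).
     if (i, j) \<notin> boxes (r # la) then 0 else if i = 1 then j else r + T (i - 1, j))"

lemma prepend_row_Suc: "(i, j) \<in> boxes la \<Longrightarrow> prepend_row r la T (Suc i, j) = r + T (i, j)"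
  by (auto simp: prepend_row_def mem_boxes_Cons boxes_def)

lemma bij_betw_prepend_row:
  assumes "bij_betw T (boxes la) {1..n}"
  shows "bij_betw (prepend_row r la T) (boxes (r # la)) {1..r + n}"
proof -
  have "bij_betw (prepend_row r la T \<circ> (\<lambda>j. (1, j))) {1..r} {1..r}"
    by (rule bij_betw_cong[THEN iffD2, OF _ bij_betw_id]) (auto simp: prepend_row_def mem_boxes_Cons)
  then have first: "bij_betw (prepend_row r la T) ((\<lambda>j. (1, j)) ` {1..r}) {1..r}"
    by (rule bij_betw_comp_iff[OF bij_betw_imageI[OF _ refl], THEN iffD2, rotated]) (auto simp: inj_on_def)
  have "bij_betw ((+) r \<circ> T) (boxes la) ((+) r ` {1..n})"
    using assms by (rule bij_betw_trans) (simp add: bij_betw_def)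
  then have "bij_betw (prepend_row r la T \<circ> (\<lambda>(i, j). (Suc i, j))) (boxes la) ((+) r ` {1..n})"
    by (rule bij_betw_cong[THEN iffD1, rotated]) (auto simp: prepend_row_Suc)
  then have "bij_betw (prepend_row r la T) ((\<lambda>(i, j). (Suc i, j)) ` boxes la) ((+) r ` {1..n})"
    by (rule bij_betw_comp_iff[OF bij_betw_imageI[OF _ refl], THEN iffD2, rotated]) (auto simp: inj_on_def)
  then have "bij_betw (prepend_row r la T) ((\<lambda>(i, j). (Suc i, j)) ` boxes la) {r + 1..r + n}"
    by (simp add: add.commute)
  then have "bij_betw (prepend_row r la T) (boxes (r # la)) ({1..r} \<union> {r + 1..r + n})"
    unfolding boxes_Cons by (intro bij_betw_combine[OF first]) auto
  moreover have "{1..r} \<union> {r + 1..r + n} = {1..r + n}"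
    by auto
  ultimately show ?thesis
    by simp
qed

lemma prepend_row_in_SYT:
  assumes "T \<in> SYT la"
  shows "prepend_row r la T \<in> SYT (r # la)"
proof -
  have bij: "bij_betw T (boxes la) {1..size_yd la}"
    and row: "\<And>i j. (i, j) \<in> boxes la \<Longrightarrow> (i, Suc j) \<in> boxes la \<Longrightarrow> T (i, j) < T (i, Suc j)"
    and col: "\<And>i j. (i, j) \<in> boxes la \<Longrightarrow> (Suc i, j) \<in> boxes la \<Longrightarrow> T (i, j) < T (Suc i, j)"
    using assms by (auto simp: SYT_def)
  have pos: "1 \<le> T (i, j)" if "(i, j) \<in> boxes la" for i j
    using bij that by (auto simp: bij_betw_def)
  show ?thesis
    unfolding SYT_def
  proof (intro CollectI conjI allI impI)
    show "bij_betw (prepend_row r la T) (boxes (r # la)) {1..size_yd (r # la)}"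
      using bij_betw_prepend_row[OF bij] by (simp add: size_yd_def)
  next
    fix i j
    assume "(i, j) \<in> boxes (r # la) \<and> (i, Suc j) \<in> boxes (r # la)"
    then consider "i = 1" "1 \<le> j" "Suc j \<le> r"
      | k where "i = Suc k" "(k, j) \<in> boxes la" "(k, Suc j) \<in> boxes la"
      by (auto simp: mem_boxes_Cons)
    then show "prepend_row r la T (i, j) < prepend_row r la T (i, Suc j)"
      by cases (simp_all add: prepend_row_def mem_boxes_Cons prepend_row_Suc row)
  next
    fix i j
    assume "(i, j) \<in> boxes (r # la) \<and> (Suc i, j) \<in> boxes (r # la)"
    then consider "i = 1" "1 \<le> j" "j \<le> r" "(1, j) \<in> boxes la"
      | k where "i = Suc k" "(k, j) \<in> boxes la" "(Suc k, j) \<in> boxes la"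
      by (auto simp: mem_boxes_Cons)
    then show "prepend_row r la T (i, j) < prepend_row r la T (Suc i, j)"
    proof cases
      case 1
      then show ?thesis
        using pos[of 1 j] by (simp add: prepend_row_def mem_boxes_Cons)
    qed (simp add: prepend_row_Suc col)
  next
    fix x
    assume "x \<notin> boxes (r # la)"
    then show "prepend_row r la T x = 0"
      by (cases x) (simp add: prepend_row_def)
  qed
qed

lemma SYT_nonempty: "SYT la \<noteq> {}"
proof (induction la)
  case Nil
  have "(\<lambda>_. 0) \<in> SYT []"
    by (simp add: SYT_def boxes_Nil size_yd_def bij_betw_def)
  then show ?case
    by blast
next
  case (Cons r la)
  then show ?case
    using prepend_row_in_SYT by blast
qed

lemma dim_yd_pos: "0 < dim_yd la"
  using finite_SYT SYT_nonempty by (simp add: dim_yd_def card_gt_0_iff)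

lemma zero_less_complex_iff: "0 < c \<longleftrightarrow> c \<in> \<real> \<and> 0 < Re c"
  by (auto simp: less_complex_def complex_is_Real_iff)

lemma zero_less_complex_iff_of_real: "0 < c \<longleftrightarrow> (\<exists>r>0. c = complex_of_real r)"
  by (auto simp: zero_less_complex_iff elim!: Reals_cases)

lemma zero_less_complex_of_real [simp]: "0 < complex_of_real r \<longleftrightarrow> 0 < r"
  by (simp add: less_complex_def)

lemma complex_mult_pos: "0 < a \<Longrightarrow> 0 < b \<Longrightarrow> 0 < a * (b :: complex)"
  by (auto simp: zero_less_complex_iff_of_real simp flip: of_real_mult)

lemma complex_divide_pos: "0 < a \<Longrightarrow> 0 < b \<Longrightarrow> 0 < a / (b :: complex)"
  by (auto simp: zero_less_complex_iff_of_real simp flip: of_real_divide)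

lemma complex_mult_pos_cancel_left: "0 < a \<Longrightarrow> 0 < a * b \<longleftrightarrow> 0 < (b :: complex)"
proof
  assume "0 < a" "0 < a * b"
  moreover have "b = a * b / a"
    using \<open>0 < a\<close> by auto
  ultimately show "0 < b"
    by (metis complex_divide_pos)
qed (rule complex_mult_pos)

lemma complex_prod_pos: "(\<And>x. x \<in> A \<Longrightarrow> 0 < f x) \<Longrightarrow> 0 < (\<Prod>x\<in>A. f x :: complex)"
  by (induction A rule: infinite_finite_induct) (auto simp: less_complex_def intro: complex_mult_pos)

definition content_ratio :: "complex \<Rightarrow> complex \<Rightarrow> nat list \<Rightarrow> complex" where
  "content_ratio z z' la =
     (\<Prod>(i, j)\<in>boxes la. (z + of_int (int j - int i)) * (z' + of_int (int j - int i)))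
       / pochhammer (z * z') (size_yd la)"

lemma M_zz_eq_content_ratio:
  "M_zz z z' la = content_ratio z z' la * complex_of_real (real (dim_yd la) ^ 2 / fact (size_yd la))"
  by (simp add: M_zz_def content_ratio_def)

lemma M_zz_pos_iff: "0 < M_zz z z' la \<longleftrightarrow> 0 < content_ratio z z' la"
proof -
  have "0 < real (dim_yd la) ^ 2 / fact (size_yd la)"
    using dim_yd_pos[of la] by simp
  then have "0 < complex_of_real (real (dim_yd la) ^ 2 / fact (size_yd la))"
    by (simp only: zero_less_complex_of_real)
  then show ?thesis
    unfolding M_zz_eq_content_ratio by (subst mult.commute) (rule complex_mult_pos_cancel_left)
qed

lemma add_of_int_neq_0_if_notin_Ints: "w \<notin> \<int> \<Longrightarrow> w + of_int k \<noteq> (0 :: 'a :: ring_1)"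
proof
  assume "w + of_int k = 0"
  then have "w = of_int (- k)"
    by (simp add: eq_neg_iff_add_eq_0)
  moreover assume "w \<notin> \<int>"
  ultimately show False
    by simp
qed

lemma M_zz_nonzero:
  assumes "z \<notin> \<int>" "z' \<notin> \<int>" "\<forall>n::nat. z * z' \<noteq> - of_nat n"
  shows "M_zz z z' la \<noteq> 0"
proof -
  have "(z + of_int k) * (z' + of_int k) \<noteq> 0" for k
    using assms(1,2) by (simp add: add_of_int_neq_0_if_notin_Ints)
  then have "(\<Prod>(i, j)\<in>boxes la. (z + of_int (int j - int i)) * (z' + of_int (int j - int i))) \<noteq> 0"
    by (auto simp: prod_zero_iff finite_boxes simp del: of_int_diff)
  moreover have "pochhammer (z * z') (size_yd la) \<noteq> 0"
    using assms(3) by (simp add: pochhammer_eq_0_iff)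
  ultimately show ?thesis
    using dim_yd_pos[of la] by (simp add: M_zz_eq_content_ratio content_ratio_def)
qed

lemma content_ratio_row_Suc:
  "content_ratio z z' [Suc n] = content_ratio z z' [n] * ((z + of_nat n) * (z' + of_nat n) / (z * z' + of_nat n))"
proof -
  have "boxes [Suc n] = insert (1, Suc n) (boxes [n])" "(1, Suc n) \<notin> boxes [n]"
    by (auto simp: boxes_def)
  then show ?thesis
    by (simp add: content_ratio_def finite_boxes size_yd_def pochhammer_Suc)
qed

lemma content_ratio_column_Suc:
  "content_ratio z z' (replicate (Suc n) 1)
     = content_ratio z z' (replicate n 1) * ((z - of_nat n) * (z' - of_nat n) / (z * z' + of_nat n))"
proof -
  have "boxes (replicate (Suc n) 1) = insert (Suc n, 1) (boxes (replicate n 1))"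
    by (auto simp: boxes_def nth_append simp flip: replicate_append_same simp del: replicate_Suc replicate_append_same)
  moreover have "(Suc n, 1) \<notin> boxes (replicate n 1)"
    by (simp add: boxes_def)
  ultimately show ?thesis
    by (simp add: content_ratio_def finite_boxes size_yd_def sum_list_replicate pochhammer_Suc)
qed

lemma content_ratio_square:
  "content_ratio z z' [2, 2] = content_ratio z z' [2, 1] * (z * z' / (z * z' + 3))"
proof -
  have "boxes [2, 1] = {(1, 1), (1, 2), (2, 1)}" "boxes [2, 2] = {(1, 1), (1, 2), (2, 1), (2, 2)}"
    by (auto simp: boxes_def nth_Cons split: nat.splits)
  moreover have "size_yd [2, 1] = 3" "size_yd [2, 2] = Suc 3"
    by (simp_all add: size_yd_def)
  ultimately show ?thesis
    unfolding content_ratio_def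
    by (simp add: pochhammer_Suc[of "z * z'" 3, simplified] times_divide_times_eq ac_simps)
qed

lemma content_step_ratios_pos:
  assumes "\<forall>la. young_diagram la \<longrightarrow> 0 < content_ratio z z' la"
  shows "0 < (z + of_nat n) * (z' + of_nat n) / (z * z' + of_nat n)"
    and "0 < (z - of_nat n) * (z' - of_nat n) / (z * z' + of_nat n)"
    and "0 < z * z' / (z * z' + 3)"
proof -
  have row: "0 < content_ratio z z' [m]" for m
  proof (cases m)
    case 0
    then have "boxes [m] = {}"
      by (simp add: boxes_def)
    then show ?thesis
      by (simp add: content_ratio_def 0 size_yd_def less_complex_def)
  qed (simp add: assms young_diagram_def)
  have column: "0 < content_ratio z z' (replicate m 1)" for m
    using assms by (simp add: young_diagram_def sorted_wrt_iff_nth_less)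
  show "0 < (z + of_nat n) * (z' + of_nat n) / (z * z' + of_nat n)"
    using row[of "Suc n"] unfolding content_ratio_row_Suc complex_mult_pos_cancel_left[OF row[of n]] .
  show "0 < (z - of_nat n) * (z' - of_nat n) / (z * z' + of_nat n)"
    using column[of "Suc n"] unfolding content_ratio_column_Suc complex_mult_pos_cancel_left[OF column[of n]] .
  have "0 < content_ratio z z' [2, 1]" "0 < content_ratio z z' [2, 2]"
    using assms by (simp_all add: young_diagram_def)
  then show "0 < z * z' / (z * z' + 3)"
    unfolding content_ratio_square by (simp only: complex_mult_pos_cancel_left)
qed

lemma Reals_if_step_ratios_pos:
  fixes z z' :: complex
  assumes up1: "0 < (z + 1) * (z' + 1) / (z * z' + 1)"
    and up2: "0 < (z + 2) * (z' + 2) / (z * z' + 2)"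
    and down2: "0 < (z - 2) * (z' - 2) / (z * z' + 2)"
  shows "z * z' \<in> \<real>" and "z + z' \<in> \<real>"
proof -
  have "z * z' + 2 \<noteq> 0" "z * z' + 1 \<noteq> 0"
    using up1 up2 by auto
  have "(z + 2) * (z' + 2) / (z * z' + 2) + (z - 2) * (z' - 2) / (z * z' + 2) = 2 + 4 / (z * z' + 2)"
    (is "?up + ?down = _")
  proof -
    have "?up + ?down = ((z + 2) * (z' + 2) + (z - 2) * (z' - 2)) / (z * z' + 2)"
      by (rule add_divide_distrib[symmetric])
    also have "\<dots> = (2 * (z * z' + 2) + 4) / (z * z' + 2)"
      by (simp add: algebra_simps)
    also have "\<dots> = 2 + 4 / (z * z' + 2)"
      using \<open>z * z' + 2 \<noteq> 0\<close> by (simp add: field_simps)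
    finally show ?thesis .
  qed
  moreover have "?up + ?down \<in> \<real>"
    using up2 down2 by (simp add: zero_less_complex_iff)
  ultimately have "4 / (z * z' + 2) \<in> \<real>"
    by (metis Reals_diff Reals_numeral add_diff_cancel_left')
  then have "4 / (4 / (z * z' + 2)) - 2 \<in> \<real>"
    by (meson Reals_diff Reals_divide Reals_numeral)
  moreover have "4 / (4 / (z * z' + 2)) - 2 = z * z'"
    using \<open>z * z' + 2 \<noteq> 0\<close> by (simp add: field_simps)
  ultimately show real_product: "z * z' \<in> \<real>"
    by metis
  have "(z + 1) * (z' + 1) / (z * z' + 1) \<in> \<real>"
    using up1 by (simp add: zero_less_complex_iff)
  then have "(z + 1) * (z' + 1) / (z * z' + 1) * (z * z' + 1) \<in> \<real>"
    using real_product by (meson Reals_mult Reals_add Reals_1)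
  then have "(z + 1) * (z' + 1) \<in> \<real>"
    using \<open>z * z' + 1 \<noteq> 0\<close> by simp
  then have "(z + 1) * (z' + 1) - (z * z' + 1) \<in> \<real>"
    using real_product by (meson Reals_diff Reals_add Reals_1)
  moreover have "(z + 1) * (z' + 1) - (z * z' + 1) = z + z'"
    by (simp add: algebra_simps)
  ultimately show "z + z' \<in> \<real>"
    by simp
qed

lemma Reals_or_cnj_if_add_mult_Reals:
  fixes z w :: complex
  assumes "z + w \<in> \<real>" "z * w \<in> \<real>"
  shows "(z \<in> \<real> \<and> w \<in> \<real>) \<or> w = cnj z"
proof -
  have "Im w = - Im z"
    using assms(1) by (simp add: complex_is_Real_iff)
  moreover have "Re z * Im w + Im z * Re w = 0"
    using assms(2) by (simp add: complex_is_Real_iff)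
  ultimately have "Im z * (Re w - Re z) = 0"
    by (simp add: algebra_simps)
  with \<open>Im w = - Im z\<close> show ?thesis
    by (auto simp: complex_is_Real_iff complex_eq_iff)
qed

lemma separated_step_ratios_not_pos:
  fixes x y :: real and c :: int
  assumes "x < c" "c < y" "\<forall>n::nat. x * y + n \<noteq> 0"
    and up: "\<forall>n::nat. 0 < (x + n) * (y + n) / (x * y + n)"
    and down: "\<forall>n::nat. 0 < (x - n) * (y - n) / (x * y + n)"
    and three: "0 < x * y / (x * y + 3)"
  shows False
proof (cases "0 < x * y")
  case True
  show False
  proof (cases "0 \<le> c")
    case True
    then have "(x - nat c) * (y - nat c) < 0"
      using assms(1,2) by (simp add: mult_neg_pos)
    with down \<open>0 < x * y\<close> show False
      by (auto simp: zero_less_divide_iff dest: spec[of _ "nat c"])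
  next
    case False
    then have "(x + nat (- c)) * (y + nat (- c)) < 0"
      using assms(1,2) by (simp add: mult_neg_pos)
    with up \<open>0 < x * y\<close> show False
      by (auto simp: zero_less_divide_iff dest: spec[of _ "nat (- c)"])
  qed
next
  case False
  then have "x * y < 0"
    using assms(3) by (metis add_0 linorder_neqE_linordered_idom of_nat_0)
  then have "x < 0" "0 < y"
    using assms(1,2) by (auto simp: mult_less_0_iff)
  have "x * y + 3 < 0"
    using three \<open>x * y < 0\<close> by (simp add: zero_less_divide_iff)
  define n where "n = nat \<lfloor>- (x * y)\<rfloor>"
  have "x * y + n \<le> 0" "- (x * y) < n + 1" "3 \<le> n"
    using \<open>x * y + 3 < 0\<close> by (simp_all add: n_def) linarith+
  then have "x * y + n < 0"
    using assms(3) by (auto simp: order.order_iff_strict)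
  then have "x + n < 0" "n < y"
    using up down \<open>x < 0\<close> \<open>0 < y\<close>
    by (auto simp: zero_less_divide_iff mult_less_0_iff dest: spec[of _ n])
  then have "real n * n < (- x) * y"
    by (intro mult_strict_mono) auto
  moreover have "3 * real n \<le> real n * n"
    using \<open>3 \<le> n\<close> by (intro mult_right_mono) auto
  ultimately show False
    using \<open>- (x * y) < n + 1\<close> \<open>3 \<le> n\<close> by simp
qed

lemma same_unit_interval_if_step_ratios_pos:
  fixes x y :: real
  assumes "x \<notin> \<int>" "y \<notin> \<int>" "\<forall>n::nat. x * y + n \<noteq> 0"
    and "\<forall>n::nat. 0 < (x + n) * (y + n) / (x * y + n)"
    and "\<forall>n::nat. 0 < (x - n) * (y - n) / (x * y + n)"
    and "0 < x * y / (x * y + 3)"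
  shows "\<exists>m::int. m < x \<and> x < m + 1 \<and> m < y \<and> y < m + 1"
proof -
  have floor_less: "of_int \<lfloor>w\<rfloor> < w" if "w \<notin> \<int>" for w :: real
  proof -
    have "of_int \<lfloor>w\<rfloor> \<noteq> w"
      using that Ints_of_int by metis
    then show ?thesis
      using of_int_floor_le[of w] by linarith
  qed
  have "\<lfloor>x\<rfloor> = \<lfloor>y\<rfloor>"
  proof (rule ccontr)
    assume "\<lfloor>x\<rfloor> \<noteq> \<lfloor>y\<rfloor>"
    then consider "x < \<lfloor>y\<rfloor>" | "y < \<lfloor>x\<rfloor>"
      by linarith
    then show False
    proof cases
      case 1
      then show False
        using separated_step_ratios_not_pos[of x "\<lfloor>y\<rfloor>" y] floor_less assms by blast
    next
      case 2
      moreover have "\<forall>n::nat. y * x + n \<noteq> 0"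
        and "\<forall>n::nat. 0 < (y + n) * (x + n) / (y * x + n)"
        and "\<forall>n::nat. 0 < (y - n) * (x - n) / (y * x + n)"
        and "0 < y * x / (y * x + 3)"
        using assms(3-6) by (simp_all add: mult.commute)
      ultimately show False
        using separated_step_ratios_not_pos[of y "\<lfloor>x\<rfloor>" x] floor_less assms(1) by blast
    qed
  qed
  then show ?thesis
    using floor_less[OF assms(1)] floor_less[OF assms(2)] floor_correct[of x] floor_correct[of y]
    by (intro exI[of _ "\<lfloor>x\<rfloor>"]) auto
qed

definition principal_or_complementary :: "complex \<Rightarrow> complex \<Rightarrow> bool" where
  "principal_or_complementary z z' \<longleftrightarrow>
     z' = cnj z \<or> (z \<in> \<real> \<and> z' \<in> \<real> \<and> (\<exists>m::int. of_int m < Re z \<and> Re z < of_int m + 1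
                                               \<and> of_int m < Re z' \<and> Re z' < of_int m + 1))"

lemma principal_or_complementary_if_content_ratio_pos:
  fixes z z' :: complex
  assumes "z \<notin> \<int>" "z' \<notin> \<int>" "\<forall>n::nat. z * z' \<noteq> - of_nat n"
    and "\<forall>la. young_diagram la \<longrightarrow> 0 < content_ratio z z' la"
  shows "principal_or_complementary z z'"
proof -
  note ratios = content_step_ratios_pos[OF assms(4)]
  have "z * z' \<in> \<real>" "z + z' \<in> \<real>"
    using Reals_if_step_ratios_pos ratios(1)[of 1] ratios(1)[of 2] ratios(2)[of 2] by simp_all
  then consider "z \<in> \<real>" "z' \<in> \<real>" | "z' = cnj z"
    using Reals_or_cnj_if_add_mult_Reals by blast
  then show ?thesis
  proof cases
    case 1
    then obtain x y where xy: "z = of_real x" "z' = of_real y"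
      by (auto elim!: Reals_cases)
    have "\<exists>m::int. m < x \<and> x < m + 1 \<and> m < y \<and> y < m + 1"
    proof (rule same_unit_interval_if_step_ratios_pos)
      show "x \<notin> \<int>" "y \<notin> \<int>"
        using assms(1,2) xy by simp_all
      show "\<forall>n::nat. x * y + n \<noteq> 0"
      proof
        fix n :: nat
        have "complex_of_real (x * y + n) = z * z' + of_nat n"
          by (simp add: xy)
        moreover have "z * z' + of_nat n \<noteq> 0"
          using assms(3) by (simp add: eq_neg_iff_add_eq_0)
        ultimately show "x * y + n \<noteq> 0"
          by (metis of_real_0)
      qed
      show "\<forall>n::nat. 0 < (x + n) * (y + n) / (x * y + n)"
        using ratios(1) by (simp add: xy zero_less_complex_iff)
      show "\<forall>n::nat. 0 < (x - n) * (y - n) / (x * y + n)"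
        using ratios(2) by (simp add: xy zero_less_complex_iff)
      show "0 < x * y / (x * y + 3)"
        using ratios(3) by (simp add: xy zero_less_complex_iff)
    qed
    then show ?thesis
      using 1 xy by (simp add: principal_or_complementary_def)
  qed (simp add: principal_or_complementary_def)
qed

lemma content_factor_pos:
  fixes z z' :: complex
  assumes "z \<notin> \<int>"
    and "principal_or_complementary z z'"
  shows "0 < (z + of_int k) * (z' + of_int k)"
  using assms(2) unfolding principal_or_complementary_def
proof
  assume "z' = cnj z"
  then have "(z + of_int k) * (z' + of_int k) = (z + of_int k) * cnj (z + of_int k)"
    by simp
  also have "\<dots> = complex_of_real ((cmod (z + of_int k))\<^sup>2)"
    by (rule complex_norm_square[symmetric])
  finally have "(z + of_int k) * (z' + of_int k) = complex_of_real ((cmod (z + of_int k))\<^sup>2)" .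
  moreover have "z + of_int k \<noteq> 0"
    using assms(1) by (rule add_of_int_neq_0_if_notin_Ints)
  ultimately show ?thesis
    by (simp del: of_real_power)
next
  assume "z \<in> \<real> \<and> z' \<in> \<real> \<and> (\<exists>m::int. of_int m < Re z \<and> Re z < of_int m + 1
                                   \<and> of_int m < Re z' \<and> Re z' < of_int m + 1)"
  then obtain x y m where xy: "z = of_real x" "z' = of_real y"
    and m: "of_int m < x" "x < of_int m + 1" "of_int m < y" "y < of_int m + 1"
    by (auto elim!: Reals_cases)
  have "0 < (x + of_int k) * (y + of_int k)"
  proof (cases "0 \<le> m + k")
    case True
    then show ?thesis
      using m by (intro mult_pos_pos) linarith+
  next
    case False
    then show ?thesis
      using m by (intro mult_neg_neg) linarith+
  qed
  moreover have "(z + of_int k) * (z' + of_int k) = complex_of_real ((x + of_int k) * (y + of_int k))"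
    by (simp add: xy)
  ultimately show ?thesis
    by (simp only: zero_less_complex_of_real)
qed

lemma content_ratio_pos:
  assumes "\<forall>k::int. 0 < (z + of_int k) * (z' + of_int k)"
  shows "0 < content_ratio z z' la"
proof -
  have "0 < (\<Prod>(i, j)\<in>boxes la. (z + of_int (int j - int i)) * (z' + of_int (int j - int i)))"
    using assms by (intro complex_prod_pos) (auto simp del: of_int_diff)
  moreover obtain r where "0 < r" "z * z' = of_real r"
    using assms[rule_format, of 0] by (auto simp: zero_less_complex_iff_of_real)
  then have "0 < pochhammer (z * z') (size_yd la)"
    by (simp add: pochhammer_of_real pochhammer_pos)
  ultimately show ?thesis
    unfolding content_ratio_def by (rule complex_divide_pos)
qed

theorem proposition2p2:
  fixes z z' :: complex
  assumes "z \<notin> \<int>" and "z' \<notin> \<int>"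
    and "\<forall>n::nat. z * z' \<noteq> - of_nat n"
  shows "(\<forall>la. young_diagram la \<longrightarrow> M_zz z z' la \<noteq> 0)
    \<and> ((\<forall>la. young_diagram la \<longrightarrow> M_zz z z' la \<in> \<real> \<and> Re (M_zz z z' la) > 0)
        \<longleftrightarrow> (z' = cnj z
             \<or> (z \<in> \<real> \<and> z' \<in> \<real> \<and> (\<exists>m::int. of_int m < Re z \<and> Re z < of_int m + 1
                                      \<and> of_int m < Re z' \<and> Re z' < of_int m + 1))))"
proof -
  have pos_iff: "M_zz z z' la \<in> \<real> \<and> Re (M_zz z z' la) > 0 \<longleftrightarrow> 0 < content_ratio z z' la" for la
    by (simp flip: zero_less_complex_iff add: M_zz_pos_iff)
  have "(\<forall>la. young_diagram la \<longrightarrow> 0 < content_ratio z z' la) \<longleftrightarrow> principal_or_complementary z z'"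
    using principal_or_complementary_if_content_ratio_pos[OF assms]
      content_ratio_pos content_factor_pos[OF assms(1)]
    by blast
  then show ?thesis
    using M_zz_nonzero[OF assms] by (simp add: pos_iff principal_or_complementary_def)
qed

end
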